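(* Let $p>3$ be a prime and for $1\le k\le p-1$ define $$G(p,k)=(-1)^{p+k}\frac{p\binom{2p-1}{p-1}\binom{4p+2k-2}{2p+k-1}\binom{2p-k-1}{p-1}\binom{2p+k-1}{2k}}{4^{5p-k-4}\binom{2k}{k}}.$$ Then $$G\Big(p,\frac{p+1}{2}\Big)\equiv(-1)^{(p-1)/2}3p\left(1-5pq_p(2)+15p^2q_p(2)^2\right)\pmod{p^4}.$$
   Context: $q_p(2)=(2^{p-1}-1)/p$ is the Fermat quotient. Congruences between rationals modulo $p^m$ mean the difference is $p^m$ times a rational with denominator prime to $p$. *)

theory Defs
  imports Complex_Main "HOL-Computational_Algebra.Primes"
begin

definition fermat_quotient2 :: "nat \<Rightarrow> rat" where
  "fermat_quotient2 p = (2 ^ (p - 1) - 1) / of_nat p"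

definition rat_cong_pow :: "rat \<Rightarrow> rat \<Rightarrow> nat \<Rightarrow> nat \<Rightarrow> bool" where
  "rat_cong_pow a b p m \<longleftrightarrow>
     (\<exists>r::rat. a - b = of_nat (p ^ m) * r \<and> coprime (snd (quotient_of r)) (int p))"

definition G :: "nat \<Rightarrow> nat \<Rightarrow> rat" where
  "G p k = (-1) ^ (p + k) *
     (of_nat p * of_nat ((2*p - 1) choose (p - 1)) * of_nat ((4*p + 2*k - 2) choose (2*p + k - 1))
      * of_nat ((2*p - k - 1) choose (p - 1)) * of_nat ((2*p + k - 1) choose (2*k)))
     / (4 ^ (5*p - k - 4) * of_nat ((2*k) choose k))"

end

theory Submission
  imports Defs "HOL-Number_Theory.Residues"
begin

text \<open>Write \<open>p = 2m + 1\<close> and \<open>T = 2^(p - 1) = 1 + p q\<^sub>p(2)\<close>. Cutting every factorial in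
  \<open>G(p, m + 1)\<close> into blocks of \<open>p - 1\<close> consecutive integers gives
  \<open>G = (-1)\<^sup>m 3p W\<^sub>1 W\<^sub>2 W\<^sub>3 W\<^sub>4 m! / (W\<^sub>0\<^sup>4 H T\<^sup>9)\<close> with
  \<open>W\<^sub>k = (kp + 1)...(kp + p - 1)\<close> and \<open>H = (2p + 1)...(2p + m)\<close>.
  Expanding \<open>(1 + py)...(n + py)\<close> to second order in \<open>py\<close> and using Wolstenholme's congruences
  for \<open>\<Sum>1/j\<close> and \<open>\<Sum>1/j\<^sup>2\<close> gives \<open>(1 + py)...(p - 1 + py) \<equiv> (p - 1)!\<close> mod \<open>p\<^sup>3\<close>
  for \<open>p\<close>-integral \<open>y\<close>; at \<open>y = k\<close> this is \<open>W\<^sub>k \<equiv> W\<^sub>0\<close>. The same expansion makes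
  \<open>y \<mapsto> (1 + py)...(m + py)\<close> quadratic modulo \<open>p\<^sup>3\<close>, so its value \<open>H\<close> at \<open>y = 2\<close> is determined
  by its values at \<open>y = 0, -1/2, -1\<close>. Up to signs and powers of \<open>4\<close> the last two equal
  \<open>(1/2)(3/2)...(m - 1/2)\<close>, which the congruence at \<open>y = -1/2\<close> pins down. This yields
  \<open>H \<equiv> m! (15 - 24T + 10T\<^sup>2)\<close>, and inverting \<open>(15 - 24T + 10T\<^sup>2) T\<^sup>9\<close> to second order in
  \<open>T - 1\<close> gives the claim.\<close>

lemma sum_atLeastAtMost_split_reflect:
  fixes h :: "nat \<Rightarrow> 'a::comm_monoid_add"
  shows "(\<Sum>j=1..2*m. h j) = (\<Sum>i=1..m. h i) + (\<Sum>i=1..m. h (2*m+1-i))"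
proof -
  have "(\<Sum>j=1..m+m. h j) = (\<Sum>j=1..m. h j) + (\<Sum>j=m+1..m+m. h j)"
    by (rule sum.ub_add_nat) simp
  also have "(\<Sum>j=m+1..m+m. h j) = (\<Sum>k=1..m. h (m + k))"
    using sum.shift_bounds_cl_nat_ivl[of h 1 m m] by (simp add: add.commute)
  also have "\<dots> = (\<Sum>k=1..m. h (m + (m + 1 - k)))"
    by (rule sum.atLeastAtMost_rev)
  also have "\<dots> = (\<Sum>k=1..m. h (2*m+1-k))"
    by (rule sum.cong) (auto simp: mult_2)
  finally show ?thesis by (simp add: mult_2)
qed

lemma sum_atLeastAtMost_split_parity:
  fixes h :: "nat \<Rightarrow> 'a::comm_monoid_add"
  shows "(\<Sum>j=1..2*m. h j) = (\<Sum>i=1..m. h (2*i)) + (\<Sum>i=1..m. h (2*m+1-2*i))"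
proof -
  have "(\<Sum>j=1..2*m. h j) = (\<Sum>i=1..m. h (2*i)) + (\<Sum>i=1..m. h (2*i - 1))"
    by (induction m) (simp_all add: sum.cl_ivl_Suc add_ac)
  also have "(\<Sum>i=1..m. h (2*i - 1)) = (\<Sum>i=1..m. h (2*(m + 1 - i) - 1))"
    by (rule sum.atLeastAtMost_rev)
  also have "\<dots> = (\<Sum>i=1..m. h (2*m+1-2*i))"
    by (rule sum.cong) (auto simp: algebra_simps)
  finally show ?thesis .
qed

lemma inverse_add_reflect:
  assumes "0 < j" "j < p"
  shows "inverse (of_nat (p - j)) + inverse (of_nat j) =
    of_nat p * (inverse (of_nat (p - j)) * inverse (of_nat j) :: 'a::field_char_0)"
proof -
  have "(of_nat p :: 'a) = of_nat (p - j) + of_nat j" using assms by (simp add: of_nat_diff)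
  moreover have "(of_nat (p - j) :: 'a) \<noteq> 0" "(of_nat j :: 'a) \<noteq> 0" using assms by auto
  ultimately show ?thesis by (simp add: field_simps)
qed

lemma pochhammer_one_plus: "pochhammer (1 + x) n = (\<Prod>j=1..n. x + of_nat j)"
  unfolding pochhammer_prod
  by (rule prod.reindex_bij_witness[of _ "\<lambda>j. j - 1" Suc]) (auto simp: add_ac)

lemma fact_add_pochhammer: "fact (n + k) = fact n * pochhammer (1 + of_nat n) k"
  unfolding pochhammer_fact by (rule pochhammer_product')

lemma pochhammer_half_minus:
  "pochhammer (1/2 - of_nat m :: 'a::field_char_0) m = (-1)^m * pochhammer (1/2) m"
  using pochhammer_minus[of "of_nat m - 1/2 :: 'a" m] by simp

lemma pochhammer_half_minus_double:
  "pochhammer (1/2 - of_nat m :: 'a::field_char_0) (2*m) = (-1)^m * pochhammer (1/2) m ^ 2"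
  using pochhammer_product'[of "1/2 - of_nat m :: 'a" m m]
  by (simp add: mult_2 pochhammer_half_minus power2_eq_square)

lemma pochhammer_minus_double:
  "pochhammer (- of_nat (2*m) :: 'a::field_char_0) m = (-1)^m * 4^m * pochhammer (1/2) m"
proof -
  have "pochhammer (- of_nat (2*m) :: 'a) m = (-1)^m * pochhammer (1 + of_nat m) m"
    using pochhammer_minus[of "of_nat (2*m) :: 'a" m] by (simp add: add.commute)
  moreover have "fact (2*m) = fact m * pochhammer (1 + of_nat m :: 'a) m"
    using fact_add_pochhammer[of m m] by (simp add: mult_2)
  ultimately show ?thesis
    using fact_double[of m, where 'a = 'a] by (simp add: power_mult)
qed

definition block_prod :: "nat \<Rightarrow> nat \<Rightarrow> 'a::comm_semiring_1" where
  "block_prod p k = pochhammer (1 + of_nat p * of_nat k) (p - 1)"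

lemma block_prod_0: "block_prod p 0 = fact (p - 1)"
  unfolding block_prod_def by (simp add: pochhammer_fact)

lemma fact_add_block_prod: "fact (k * p + (p - 1)) = fact (k * p) * block_prod p k"
  unfolding block_prod_def by (subst fact_add_pochhammer) (simp add: mult.commute)

lemma fact_mult_block_prod:
  assumes "p > 0"
  shows "fact (k * p) = (fact k * of_nat p ^ k * (\<Prod>i<k. block_prod p i) :: 'a::field_char_0)"
proof (induction k)
  case (Suc k)
  have "Suc k * p = Suc (k * p + (p - 1))" using assms by simp
  hence "fact (Suc k * p) = of_nat (Suc k * p) * (fact (k * p + (p - 1)) :: 'a)"
    by (simp only: fact_Suc)
  also have "\<dots> = of_nat (Suc k * p) * (fact (k * p) * block_prod p k)"
    by (simp only: fact_add_block_prod)
  finally show ?case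
    using Suc.IH by (simp add: algebra_simps)
qed simp

lemma of_nat_choose_eq_fact:
  "n = k + l \<Longrightarrow> of_nat (n choose k) = (fact n / (fact k * fact l) :: 'a::field_char_0)"
  by (simp add: binomial_fact)

text \<open>The last factor is the inverse of the first two, truncated after second order in \<open>T - 1\<close>.\<close>

lemma truncated_inverse_identity:
  fixes T :: "'a::comm_ring_1"
  shows "(15 - 24 * T + 10 * T^2) * T^9 * (1 - 5 * (T - 1) + 15 * (T - 1)^2) =
    1 + (T - 1)^3 * (1 + 3*T + 6*T^2 + 10*T^3 + 15*T^4 + 21*T^5 + 28*T^6 + 36*T^7 + 45*T^8
      - 260*T^9 + 150*T^10)"
  by (simp add: algebra_simps power_numeral_reduce power2_eq_square)

section \<open>\<open>p\<close>-integral rationals\<close>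

definition p_integral :: "nat \<Rightarrow> rat \<Rightarrow> bool" where
  "p_integral p r \<longleftrightarrow> coprime (snd (quotient_of r)) (int p)"

definition p_unit :: "nat \<Rightarrow> rat \<Rightarrow> bool" where
  "p_unit p x \<longleftrightarrow> x \<noteq> 0 \<and> p_integral p x \<and> p_integral p (inverse x)"

lemma rat_cong_pow_iff:
  "rat_cong_pow a b p n \<longleftrightarrow> (\<exists>r. p_integral p r \<and> a - b = of_nat p ^ n * r)"
  unfolding rat_cong_pow_def p_integral_def by (auto simp: of_nat_power)

locale prime_modulus =
  fixes p :: nat
  assumes prime: "prime p"
begin

lemma not_dvd_pos_less: "0 < a \<Longrightarrow> a < p \<Longrightarrow> \<not> p dvd a"
  by (auto dest: dvd_imp_le)

lemma p_integral_iff: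
  "p_integral p r \<longleftrightarrow> (\<exists>a b. \<not> int p dvd b \<and> r = of_int a / of_int b)"
proof -
  obtain a b where ab: "quotient_of r = (a, b)" by (cases "quotient_of r")
  have r: "r = of_int a / of_int b" using quotient_of_div[OF ab] .
  have prime_int: "prime (int p)" using prime by simp
  show ?thesis
  proof
    assume "p_integral p r"
    hence "coprime b (int p)" unfolding p_integral_def ab by simp
    hence "\<not> int p dvd b"
      using prime_int by (metis coprime_commute prime_imp_coprime_int not_prime_unit coprime_absorb_left)
    thus "\<exists>a b. \<not> int p dvd b \<and> r = of_int a / of_int b" using r by blast
  next
    assume "\<exists>a' b'. \<not> int p dvd b' \<and> r = of_int a' / of_int b'"
    then obtain a' b' where ab': "\<not> int p dvd b'" "r = of_int a' / of_int b'" by blast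
    have "b' \<noteq> 0" using ab' by auto
    moreover have "b > 0" using quotient_of_denom_pos[OF ab] .
    ultimately have "a' * b = a * b'" using ab' r by (simp add: field_simps flip: of_int_mult)
    hence "b dvd a * b'" by (metis dvd_triv_right)
    moreover have "coprime b a" using quotient_of_coprime[OF ab] by (simp add: coprime_commute)
    ultimately have "b dvd b'" using coprime_dvd_mult_right_iff by blast
    hence "\<not> int p dvd b" using ab'(1) dvd_trans by blast
    hence "coprime b (int p)"
      using prime_imp_coprime[OF prime_int] coprime_commute by blast
    thus "p_integral p r" unfolding p_integral_def ab by simp
  qed
qed

lemma p_integral_of_int [simp]: "p_integral p (of_int a)"
  unfolding p_integral_iff using prime
  by (intro exI[of _ a] exI[of _ 1]) (auto simp: prime_gt_1_nat)

lemma p_integral_of_nat [simp]: "p_integral p (of_nat a)"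
  using p_integral_of_int[of "int a"] by simp

lemma p_integral_numeral [simp]: "p_integral p (numeral a)"
  using p_integral_of_int[of "numeral a"] by simp

lemma p_integral_fact [simp]: "p_integral p (fact n)"
  using p_integral_of_nat[of "fact n"] by simp

lemma p_integral_0 [simp]: "p_integral p 0" and p_integral_1 [simp]: "p_integral p 1"
  using p_integral_of_int[of 0] p_integral_of_int[of 1] by simp_all

lemma p_integral_add_mult:
  assumes "p_integral p x" "p_integral p y"
  shows p_integral_add: "p_integral p (x + y)" and p_integral_mult: "p_integral p (x * y)"
proof -
  obtain a b c d where ab: "\<not> int p dvd b" "x = of_int a / of_int b"
    and cd: "\<not> int p dvd d" "y = of_int c / of_int d"
    using assms unfolding p_integral_iff by blast
  have "b \<noteq> 0" "d \<noteq> 0" using ab cd by auto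
  hence "x + y = of_int (a*d + c*b) / of_int (b*d)" "x * y = of_int (a*c) / of_int (b*d)"
    using ab cd by (simp_all add: field_simps)
  moreover have "\<not> int p dvd b * d"
    using ab cd prime by (simp add: prime_dvd_mult_iff)
  ultimately show "p_integral p (x + y)" "p_integral p (x * y)"
    unfolding p_integral_iff by blast+
qed

lemma p_integral_uminus: "p_integral p x \<Longrightarrow> p_integral p (- x)"
  using p_integral_mult[OF p_integral_of_int[of "-1"]] by simp

lemma p_integral_diff: "p_integral p x \<Longrightarrow> p_integral p y \<Longrightarrow> p_integral p (x - y)"
  using p_integral_add[of x "- y"] p_integral_uminus by simp

lemma p_integral_power: "p_integral p x \<Longrightarrow> p_integral p (x ^ n)"
  by (induction n) (auto intro: p_integral_mult)

lemma p_integral_sum: "(\<And>i. i \<in> A \<Longrightarrow> p_integral p (f i)) \<Longrightarrow> p_integral p (sum f A)"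
  by (induction A rule: infinite_finite_induct) (auto intro: p_integral_add)

lemma p_integral_prod: "(\<And>i. i \<in> A \<Longrightarrow> p_integral p (f i)) \<Longrightarrow> p_integral p (prod f A)"
  by (induction A rule: infinite_finite_induct) (auto intro: p_integral_mult)

lemma p_integral_inverse_of_nat: "\<not> p dvd a \<Longrightarrow> p_integral p (inverse (of_nat a))"
  unfolding p_integral_iff by (intro exI[of _ 1] exI[of _ "int a"]) (simp add: divide_inverse)

lemma p_integral_inverse_of_nat_less: "0 < j \<Longrightarrow> j < p \<Longrightarrow> p_integral p (inverse (of_nat j))"
  by (intro p_integral_inverse_of_nat not_dvd_pos_less)

lemma p_integral_half:
  assumes "p \<noteq> 2" "p_integral p x"
  shows "p_integral p (x / 2)"
proof -
  have "p_integral p (inverse (of_nat 2))"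
    using assms(1) prime_gt_1_nat[OF prime] by (intro p_integral_inverse_of_nat_less) auto
  thus ?thesis
    unfolding divide_inverse of_nat_numeral by (rule p_integral_mult[OF assms(2)])
qed

lemma p_unit_1 [simp]: "p_unit p 1"
  unfolding p_unit_def by simp

lemma p_unit_mult: "p_unit p x \<Longrightarrow> p_unit p y \<Longrightarrow> p_unit p (x * y)"
  unfolding p_unit_def by (auto simp: inverse_mult_distrib intro: p_integral_mult)

lemma p_unit_power: "p_unit p x \<Longrightarrow> p_unit p (x ^ n)"
  by (induction n) (auto intro: p_unit_mult)

lemma p_unit_prod: "(\<And>i. i \<in> A \<Longrightarrow> p_unit p (f i)) \<Longrightarrow> p_unit p (prod f A)"
  by (induction A rule: infinite_finite_induct) (auto intro: p_unit_mult)

lemma p_unit_inverse: "p_unit p x \<Longrightarrow> p_unit p (inverse x)"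
  unfolding p_unit_def by simp

lemma p_unit_of_nat: "\<not> p dvd a \<Longrightarrow> p_unit p (of_nat a)"
  unfolding p_unit_def using p_integral_inverse_of_nat by (cases "a = 0") auto

lemma p_unit_of_nat_less: "0 < a \<Longrightarrow> a < p \<Longrightarrow> p_unit p (of_nat a)"
  by (intro p_unit_of_nat not_dvd_pos_less)

lemma p_unit_fact: "n < p \<Longrightarrow> p_unit p (fact n)"
  unfolding fact_prod of_nat_prod by (intro p_unit_prod p_unit_of_nat_less) auto

lemma rat_cong_pow_refl [simp]: "rat_cong_pow x x p n"
  unfolding rat_cong_pow_iff by (intro exI[of _ 0]) simp

lemma rat_cong_powI: "p_integral p r \<Longrightarrow> x - y = of_nat p ^ n * r \<Longrightarrow> rat_cong_pow x y p n"
  unfolding rat_cong_pow_iff by blast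

lemma rat_cong_pow_add:
  assumes "rat_cong_pow x y p n" "rat_cong_pow u v p n"
  shows "rat_cong_pow (x + u) (y + v) p n"
proof -
  obtain r s where "p_integral p r" "x - y = of_nat p ^ n * r" "p_integral p s" "u - v = of_nat p ^ n * s"
    using assms unfolding rat_cong_pow_iff by blast
  thus ?thesis by (intro rat_cong_powI[of "r + s"]) (auto intro: p_integral_add simp: algebra_simps)
qed

lemma rat_cong_pow_mult_left:
  assumes "p_integral p c" "rat_cong_pow x y p n"
  shows "rat_cong_pow (c * x) (c * y) p n"
proof -
  obtain r where "p_integral p r" "x - y = of_nat p ^ n * r"
    using assms unfolding rat_cong_pow_iff by blast
  thus ?thesis using assms(1)
    by (intro rat_cong_powI[of "c * r"]) (auto intro: p_integral_mult simp: algebra_simps simp flip: right_diff_distrib)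
qed

lemma rat_cong_pow_mult_right:
  "p_integral p c \<Longrightarrow> rat_cong_pow x y p n \<Longrightarrow> rat_cong_pow (x * c) (y * c) p n"
  using rat_cong_pow_mult_left by (simp add: mult.commute)

lemma rat_cong_pow_uminus: "rat_cong_pow x y p n \<Longrightarrow> rat_cong_pow (- x) (- y) p n"
  using rat_cong_pow_mult_left[OF p_integral_of_int[of "-1"]] by simp

lemma rat_cong_pow_sym: "rat_cong_pow x y p n \<Longrightarrow> rat_cong_pow y x p n"
  using rat_cong_pow_add[OF rat_cong_pow_uminus rat_cong_pow_refl, of x y n "x + y"] by simp

lemma rat_cong_pow_trans [trans]:
  assumes "rat_cong_pow x y p n" "rat_cong_pow y z p n"
  shows "rat_cong_pow x z p n"
  using rat_cong_pow_add[OF assms] by (simp add: rat_cong_pow_def)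

lemma rat_cong_pow_diff:
  "rat_cong_pow x y p n \<Longrightarrow> rat_cong_pow u v p n \<Longrightarrow> rat_cong_pow (x - u) (y - v) p n"
  using rat_cong_pow_add[OF _ rat_cong_pow_uminus] by simp

lemma rat_cong_pow_mult:
  assumes "p_integral p x" "p_integral p v" "rat_cong_pow x y p n" "rat_cong_pow u v p n"
  shows "rat_cong_pow (x * u) (y * v) p n"
proof -
  have "rat_cong_pow (x * u) (x * v) p n" using rat_cong_pow_mult_left[OF assms(1,4)] .
  also have "rat_cong_pow (x * v) (y * v) p n"
    using rat_cong_pow_mult_left[OF assms(2,3)] by (simp add: mult.commute)
  finally show ?thesis .
qed

lemma rat_cong_pow_sum:
  "(\<And>i. i \<in> A \<Longrightarrow> rat_cong_pow (f i) (g i) p n) \<Longrightarrow> rat_cong_pow (sum f A) (sum g A) p n"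
  by (induction A rule: infinite_finite_induct) (auto intro: rat_cong_pow_add)

lemma rat_cong_pow_cancel:
  assumes "p_unit p c" "rat_cong_pow (c * x) (c * y) p n"
  shows "rat_cong_pow x y p n"
  using rat_cong_pow_mult_left[of "inverse c", OF _ assms(2)] assms(1)
  by (simp add: p_unit_def field_simps)

lemma rat_cong_pow_mult_p:
  assumes "rat_cong_pow x y p n"
  shows "rat_cong_pow (of_nat p * x) (of_nat p * y) p (Suc n)"
proof -
  obtain r where "p_integral p r" "x - y = of_nat p ^ n * r"
    using assms unfolding rat_cong_pow_iff by blast
  thus ?thesis by (intro rat_cong_powI[of r]) (auto simp: algebra_simps simp flip: right_diff_distrib)
qed

lemma two_pow_pred_eq:
  assumes "p \<noteq> 2"
  obtains t where "p_integral p t" "(2::rat) ^ (p - 1) = 1 + of_nat p * t"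
proof -
  have "\<not> p dvd 2" using assms prime_gt_1_nat[OF prime] by (intro not_dvd_pos_less) auto
  hence "p dvd 2 ^ (p - 1) - 1"
    using fermat_theorem[OF prime] cong_to_1_nat by blast
  then obtain k where "2 ^ (p - 1) - 1 = p * k" by blast
  moreover have "1 \<le> (2::nat) ^ (p - 1)" by simp
  ultimately have "2 ^ (p - 1) = 1 + p * k" by linarith
  hence "of_nat (2 ^ (p - 1)) = (of_nat (1 + p * k) :: rat)" by (simp only:)
  hence "(2::rat) ^ (p - 1) = 1 + of_nat p * of_nat k" by simp
  thus ?thesis using that p_integral_of_nat by blast
qed

section \<open>Wolstenholme's congruences\<close>

lemma inverse_reflect_cong:
  assumes "0 < j" "j < p"
  shows "rat_cong_pow (inverse (of_nat (p - j))) (- inverse (of_nat j)) p 1"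
proof (rule rat_cong_powI)
  show "p_integral p (inverse (of_nat (p - j)) * inverse (of_nat j))"
    using assms by (intro p_integral_mult p_integral_inverse_of_nat_less) auto
  show "inverse (of_nat (p - j)) - - inverse (of_nat j) =
      of_nat p ^ 1 * (inverse (of_nat (p - j)) * inverse (of_nat j) :: rat)"
    using inverse_add_reflect[OF assms] by simp
qed

lemma inverse_square_reflect_cong:
  assumes "0 < j" "j < p"
  shows "rat_cong_pow (inverse (of_nat (p - j))^2) (inverse (of_nat j)^2) p 1"
proof -
  have "p_integral p (inverse (of_nat (p - j)))" "p_integral p (- inverse (of_nat j))"
    using assms by (intro p_integral_uminus p_integral_inverse_of_nat_less; simp)+
  with inverse_reflect_cong[OF assms]
  have "rat_cong_pow (inverse (of_nat (p - j)) * inverse (of_nat (p - j)))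
      (- inverse (of_nat j) * - inverse (of_nat j)) p 1"
    by (intro rat_cong_pow_mult)
  thus ?thesis by (simp add: power2_eq_square)
qed

text \<open>With \<open>S\<close> the full sum and \<open>T\<close> its first half, the reflection \<open>j \<mapsto> p - j\<close> gives
  \<open>S \<equiv> 2 T\<close>, while splitting \<open>S\<close> into even and odd \<open>j\<close> gives \<open>S \<equiv> T / 2\<close>.\<close>

lemma wolstenholme_squares:
  assumes "p > 3"
  shows "rat_cong_pow (\<Sum>j=1..p-1. inverse (of_nat j)^2) 0 p 1"
proof -
  have "odd p" using prime_odd_nat[OF prime] assms by simp
  then obtain m where p: "p = 2*m + 1" by (rule oddE)
  define h where "h j = inverse (of_nat j :: rat)^2" for j
  define S T where "S = (\<Sum>j=1..2*m. h j)" and "T = (\<Sum>i=1..m. h i)"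
  have reflect: "rat_cong_pow (h (2*m+1-j)) (h j) p 1" if "0 < j" "j < p" for j
    using inverse_square_reflect_cong[OF that] by (simp add: h_def p)
  have "S = T + (\<Sum>i=1..m. h (2*m+1-i))"
    unfolding S_def T_def by (rule sum_atLeastAtMost_split_reflect)
  moreover have "rat_cong_pow (T + (\<Sum>i=1..m. h (2*m+1-i))) (T + T) p 1"
    unfolding T_def by (intro rat_cong_pow_add rat_cong_pow_refl rat_cong_pow_sum reflect) (use p in auto)
  ultimately have S_2T: "rat_cong_pow S (2 * T) p 1"
    by (simp only: mult_2)
  define Ev Od where "Ev = (\<Sum>i=1..m. h (2*i))" and "Od = (\<Sum>i=1..m. h (2*m+1-2*i))"
  have "Ev = (\<Sum>i=1..m. h i / 4)"
    unfolding Ev_def by (rule sum.cong) (simp_all add: h_def power2_eq_square)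
  also have "\<dots> = T / 4"
    unfolding T_def by (rule sum_divide_distrib[symmetric])
  finally have "Ev + Ev = T / 2" by simp
  moreover have "S = Ev + Od"
    unfolding S_def Ev_def Od_def by (rule sum_atLeastAtMost_split_parity)
  moreover have "rat_cong_pow (Ev + Od) (Ev + Ev) p 1"
    unfolding Od_def Ev_def by (intro rat_cong_pow_add rat_cong_pow_refl rat_cong_pow_sum reflect) (use p in auto)
  ultimately have S_half_T: "rat_cong_pow S (T / 2) p 1"
    by (simp only:)
  have "rat_cong_pow (3 * inverse 2 * T) (3 * inverse 2 * 0) p 1"
    using rat_cong_pow_sym[OF rat_cong_pow_diff[OF S_2T S_half_T]] by (simp add: field_simps)
  moreover have "p_unit p (3 * inverse 2)"
    using assms by (intro p_unit_mult p_unit_inverse p_unit_of_nat_less[of 3, simplified]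
        p_unit_of_nat_less[of 2, simplified]) auto
  ultimately have "rat_cong_pow T 0 p 1"
    by (rule rat_cong_pow_cancel[rotated])
  hence "rat_cong_pow (2 * T) (2 * 0) p 1"
    by (intro rat_cong_pow_mult_left) simp_all
  with S_2T have "rat_cong_pow S 0 p 1"
    using rat_cong_pow_trans by simp
  thus ?thesis
    unfolding S_def h_def p by simp
qed

lemma wolstenholme:
  assumes "p > 3"
  shows "rat_cong_pow (\<Sum>j=1..p-1. inverse (of_nat j)) 0 p 2"
proof -
  define K where "K = (\<Sum>j=1..p-1. inverse (of_nat (p - j)) * inverse (of_nat j) :: rat)"
  have "(\<Sum>j=1..p-1. inverse (of_nat (p - j))) = (\<Sum>j=1..p-1. inverse (of_nat j) :: rat)"
    using sum.atLeastAtMost_rev[of "\<lambda>j. inverse (of_nat j) :: rat" 1 "p - 1"] assms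
    by simp
  hence "2 * (\<Sum>j=1..p-1. inverse (of_nat j)) =
      (\<Sum>j=1..p-1. inverse (of_nat (p - j))) + (\<Sum>j=1..p-1. inverse (of_nat j) :: rat)"
    by (simp only: mult_2)
  also have "\<dots> = of_nat p * K"
    unfolding K_def sum_distrib_left sum.distrib[symmetric]
    by (rule sum.cong[OF refl], rule inverse_add_reflect) auto
  finally have sum_K: "2 * (\<Sum>j=1..p-1. inverse (of_nat j)) = of_nat p * K" .
  have "rat_cong_pow K (\<Sum>j=1..p-1. - inverse (of_nat j) * inverse (of_nat j)) p 1"
    unfolding K_def
    by (intro rat_cong_pow_sum rat_cong_pow_mult inverse_reflect_cong rat_cong_pow_refl
        p_integral_uminus p_integral_inverse_of_nat_less) auto
  also have "(\<Sum>j=1..p-1. - inverse (of_nat j) * inverse (of_nat j)) =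
      - (\<Sum>j=1..p-1. inverse (of_nat j)^2 :: rat)"
    by (simp add: sum_negf power2_eq_square)
  also have "rat_cong_pow \<dots> (- 0) p 1"
    using wolstenholme_squares[OF assms] by (rule rat_cong_pow_uminus)
  finally obtain r where "p_integral p r" "K = of_nat p * r"
    unfolding rat_cong_pow_iff by auto
  with sum_K assms show ?thesis
    by (intro rat_cong_powI[of "r / 2"] p_integral_half) (auto simp: power2_eq_square field_simps)
qed

section \<open>Congruences for shifted Pochhammer symbols\<close>

text \<open>The coefficient of \<open>x\<^sup>2\<close> is the second elementary symmetric function of the \<open>1 / c j\<close>,
  written via Newton's identity.\<close>

lemma prod_add_expansion:
  assumes "p \<noteq> 2" "finite A" "\<And>j. j \<in> A \<Longrightarrow> p_unit p (c j)" "p_integral p x"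
  shows "\<exists>R. p_integral p R \<and> (\<Prod>j\<in>A. x + c j) =
    (\<Prod>j\<in>A. c j) * (1 + (\<Sum>j\<in>A. inverse (c j)) * x +
      ((\<Sum>j\<in>A. inverse (c j))^2 - (\<Sum>j\<in>A. inverse (c j)^2)) / 2 * x^2) + x^3 * R"
  using assms(2,3)
proof (induction A rule: finite_induct)
  case empty
  show ?case by (intro exI[of _ 0]) simp
next
  case (insert a A)
  define P s1 s2 where "P = (\<Prod>j\<in>A. c j)" and "s1 = (\<Sum>j\<in>A. inverse (c j))"
    and "s2 = (\<Sum>j\<in>A. inverse (c j)^2)"
  obtain R where R: "p_integral p R"
    "(\<Prod>j\<in>A. x + c j) = P * (1 + s1 * x + (s1^2 - s2) / 2 * x^2) + x^3 * R"
    using insert unfolding P_def s1_def s2_def by auto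
  have integral: "p_integral p (c j)" "p_integral p (inverse (c j))" if "j \<in> insert a A" for j
    using insert.prems that by (auto simp: p_unit_def)
  have "c a \<noteq> 0" using insert.prems by (simp add: p_unit_def)
  have R': "p_integral p (P * ((s1^2 - s2) / 2) + (x + c a) * R)"
    unfolding P_def s1_def s2_def using integral R(1) assms(1,4)
    by (intro p_integral_add p_integral_mult p_integral_half p_integral_diff p_integral_power
        p_integral_sum p_integral_prod) auto
  have "(\<Prod>j\<in>insert a A. x + c j) = (x + c a) * (\<Prod>j\<in>A. x + c j)"
    using insert.hyps by simp
  also have "\<dots> = P * c a * (1 + (s1 + inverse (c a)) * x +
      ((s1 + inverse (c a))^2 - (s2 + inverse (c a)^2)) / 2 * x^2) +
      x^3 * (P * ((s1^2 - s2) / 2) + (x + c a) * R)"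
    unfolding R(2) using \<open>c a \<noteq> 0\<close> by (simp add: field_simps power2_eq_square power3_eq_cube)
  finally have "(\<Prod>j\<in>insert a A. x + c j) = P * c a * (1 + (s1 + inverse (c a)) * x +
      ((s1 + inverse (c a))^2 - (s2 + inverse (c a)^2)) / 2 * x^2) +
      x^3 * (P * ((s1^2 - s2) / 2) + (x + c a) * R)" .
  moreover have "(\<Prod>j\<in>insert a A. c j) = P * c a"
    "(\<Sum>j\<in>insert a A. inverse (c j)) = s1 + inverse (c a)"
    "(\<Sum>j\<in>insert a A. inverse (c j)^2) = s2 + inverse (c a)^2"
    using insert.hyps by (simp_all add: P_def s1_def s2_def)
  ultimately show ?case using R' by metis
qed

lemma pochhammer_expansion_cong:
  assumes "p \<noteq> 2" "n < p" "p_integral p y"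
  defines "s1 \<equiv> \<Sum>j=1..n. inverse (of_nat j)" and "s2 \<equiv> \<Sum>j=1..n. inverse (of_nat j)^2"
  shows "rat_cong_pow (pochhammer (1 + of_nat p * y) n)
           (fact n * (1 + s1 * (of_nat p * y) + (s1^2 - s2) / 2 * (of_nat p * y)^2)) p 3"
proof -
  have units: "p_unit p (of_nat j)" if "j \<in> {1..n}" for j
    using that assms(2) by (intro p_unit_of_nat_less) auto
  have "p_integral p (of_nat p * y)" using assms(3) by (intro p_integral_mult) simp_all
  with units obtain R where "p_integral p R" and R:
    "(\<Prod>j=1..n. of_nat p * y + of_nat j) = (\<Prod>j=1..n. of_nat j) * (1 + s1 * (of_nat p * y)
       + (s1^2 - s2) / 2 * (of_nat p * y)^2) + (of_nat p * y)^3 * R"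
    unfolding s1_def s2_def using prod_add_expansion[OF assms(1) finite_atLeastAtMost] by blast
  have expansion: "pochhammer (1 + of_nat p * y) n = fact n * (1 + s1 * (of_nat p * y)
       + (s1^2 - s2) / 2 * (of_nat p * y)^2) + (of_nat p * y)^3 * R"
    unfolding pochhammer_one_plus R by (simp add: fact_prod)
  show ?thesis
  proof (rule rat_cong_powI)
    show "p_integral p (y^3 * R)" using assms(3) \<open>p_integral p R\<close> by (intro p_integral_mult p_integral_power)
  qed (simp add: expansion power_mult_distrib)
qed

lemma pochhammer_cong_fact:
  assumes "p > 3" "p_integral p y"
  shows "rat_cong_pow (pochhammer (1 + of_nat p * y) (p - 1)) (fact (p - 1)) p 3"
proof -
  define s1 s2 where "s1 = (\<Sum>j=1..p-1. inverse (of_nat j) :: rat)"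
    and "s2 = (\<Sum>j=1..p-1. inverse (of_nat j)^2 :: rat)"
  obtain r1 r2 where "p_integral p r1" "s1 = of_nat p ^ 2 * r1" "p_integral p r2" "s2 = of_nat p * r2"
    using wolstenholme[OF assms(1)] wolstenholme_squares[OF assms(1)]
    unfolding rat_cong_pow_iff s1_def s2_def by auto
  with assms have "rat_cong_pow
      (fact (p - 1) * (1 + s1 * (of_nat p * y) + (s1^2 - s2) / 2 * (of_nat p * y)^2)) (fact (p - 1)) p 3"
    by (intro rat_cong_powI[of "fact (p - 1) * (r1 * y + (of_nat p ^ 3 * r1^2 - r2) / 2 * y^2)"]
        p_integral_mult p_integral_add p_integral_diff p_integral_power p_integral_half)
      (simp_all add: field_simps power2_eq_square power3_eq_cube)
  moreover have "rat_cong_pow (pochhammer (1 + of_nat p * y) (p - 1))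
      (fact (p - 1) * (1 + s1 * (of_nat p * y) + (s1^2 - s2) / 2 * (of_nat p * y)^2)) p 3"
    unfolding s1_def s2_def using assms by (intro pochhammer_expansion_cong) auto
  ultimately show ?thesis by (blast intro: rat_cong_pow_trans)
qed

lemma p_unit_pochhammer_shift:
  assumes "n < p"
  shows "p_unit p (pochhammer (1 + of_nat p * of_nat k) n)"
  unfolding pochhammer_one_plus
proof (rule p_unit_prod)
  fix j assume j: "j \<in> {1..n}"
  have "\<not> p dvd p * k + j"
    using j assms not_dvd_pos_less[of j] by (simp add: dvd_add_right_iff)
  thus "p_unit p (of_nat p * of_nat k + of_nat j)"
    using p_unit_of_nat by fastforce
qed

text \<open>\<open>15\<close>, \<open>-24\<close>, \<open>10\<close> are the Lagrange weights evaluating a quadratic at \<open>2\<close> from its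
  values at \<open>0\<close>, \<open>-1/2\<close>, \<open>-1\<close>.\<close>

lemma pochhammer_interpolation_cong:
  assumes "p > 3" "m < p"
  shows "rat_cong_pow (pochhammer (1 + of_nat p * 2) m)
    (15 * fact m - 24 * pochhammer (1 + of_nat p * (-1/2)) m + 10 * pochhammer (1 + of_nat p * (-1)) m) p 3"
proof -
  define E where "E = (fact m :: rat)"
  define g where "g y = pochhammer (1 + of_nat p * y) m" for y :: rat
  define s1 s2 where "s1 = (\<Sum>j=1..m. inverse (of_nat j) :: rat)"
    and "s2 = (\<Sum>j=1..m. inverse (of_nat j)^2 :: rat)"
  define a b where "a = s1 * of_nat p" and "b = (s1^2 - s2) / 2 * of_nat p ^ 2"
  have expansion: "rat_cong_pow (g y) (E * (1 + a * y + b * y^2)) p 3" if "p_integral p y" for y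
    using pochhammer_expansion_cong[of m y] that assms
    by (simp add: g_def E_def a_def b_def s1_def s2_def power_mult_distrib mult_ac)
  have "p_integral p (- 1/2)"
    using assms(1) by (intro p_integral_half p_integral_uminus) auto
  have "rat_cong_pow (g 2) (E * (1 + a * 2 + b * 2^2)) p 3"
    by (rule expansion) simp
  also have "E * (1 + a * 2 + b * 2^2) =
      15 * E - 24 * (E * (1 + a * (-1/2) + b * (-1/2)^2)) + 10 * (E * (1 + a * (-1) + b * (-1)^2))"
    by (simp add: field_simps power2_eq_square)
  also have "rat_cong_pow \<dots> (15 * E - 24 * g (-1/2) + 10 * g (-1)) p 3"
    using expansion[OF \<open>p_integral p (- 1/2)\<close>] expansion[OF p_integral_uminus[OF p_integral_1]]
    by (intro rat_cong_pow_add rat_cong_pow_diff rat_cong_pow_refl rat_cong_pow_mult_left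
        p_integral_numeral) (simp_all add: rat_cong_pow_sym)
  finally show ?thesis
    unfolding g_def E_def .
qed

text \<open>Both sides of \<open>(1 - p/2)...(p - 1 - p/2) \<equiv> (p - 1)!\<close> are exact in \<open>h = (1/2)...(m - 1/2)\<close>:
  they are \<open>(-1)\<^sup>m h\<^sup>2\<close> and \<open>4\<^sup>m h m!\<close>, so \<open>h \<equiv> (-1)\<^sup>m 4\<^sup>m m!\<close>.\<close>

lemma pochhammer_half_cong:
  assumes "p > 3" "p = 2*m + 1"
  shows "rat_cong_pow (pochhammer (1 + of_nat p * (-1/2)) m) (2^(p-1) * fact m) p 3"
proof -
  define E T h where "E = (fact m :: rat)" and "T = (2^(p-1) :: rat)" and "h = pochhammer (1/2 :: rat) m"
  have T: "T = 4^m" unfolding T_def using assms(2) by (simp add: power_mult)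
  have fact_2m: "fact (2*m) = T * h * E"
    unfolding T h_def E_def using fact_double[of m] by (simp add: power_mult)
  have "1 + of_nat p * (-1/2) = 1/2 - (of_nat m :: rat)"
    using assms(2) by (simp add: field_simps)
  hence g_half: "pochhammer (1 + of_nat p * (-1/2)) m = (-1)^m * h"
    and g_half_long: "pochhammer (1 + of_nat p * (-1/2)) (p - 1) = (-1)^m * h^2"
    unfolding h_def using assms(2) by (simp_all add: pochhammer_half_minus pochhammer_half_minus_double)
  have "p_integral p (- 1/2)"
    using assms(1) by (intro p_integral_half p_integral_uminus) auto
  from pochhammer_cong_fact[OF assms(1) this] have "rat_cong_pow ((-1)^m * h^2) (T * h * E) p 3"
    unfolding g_half_long using assms(2) fact_2m by simp
  hence "rat_cong_pow ((-1)^m * ((-1)^m * h^2)) ((-1)^m * (T * h * E)) p 3"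
    by (intro rat_cong_pow_mult_left p_integral_power p_integral_uminus p_integral_1)
  hence "rat_cong_pow (h * h) (h * ((-1)^m * T * E)) p 3"
    by (simp add: power2_eq_square mult_ac flip: power_add)
  moreover have "p_unit p h"
  proof -
    have "p_unit p T"
      unfolding T_def using assms(1) by (intro p_unit_power p_unit_of_nat_less[of 2, simplified]) simp
    moreover have "p_unit p E"
      unfolding E_def using assms(2) by (intro p_unit_fact) simp
    moreover from calculation have "h = fact (2*m) * inverse (T * E)"
      using fact_2m by (simp add: p_unit_def field_simps)
    moreover have "2*m < p" using assms(2) by simp
    ultimately show ?thesis
      by (metis p_unit_mult p_unit_inverse p_unit_fact)
  qed
  ultimately have "rat_cong_pow h ((-1)^m * T * E) p 3"
    by (rule rat_cong_pow_cancel[rotated])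
  hence "rat_cong_pow ((-1)^m * h) ((-1)^m * ((-1)^m * T * E)) p 3"
    by (intro rat_cong_pow_mult_left p_integral_power p_integral_uminus p_integral_1)
  thus ?thesis
    unfolding g_half T_def E_def by (simp add: mult.assoc flip: power_add)
qed

lemma pochhammer_two_p_cong:
  assumes "p > 3" "p = 2*m + 1"
  defines "T \<equiv> (2::rat) ^ (p - 1)"
  shows "rat_cong_pow (pochhammer (1 + of_nat p * 2) m) (fact m * (15 - 24 * T + 10 * T^2)) p 3"
proof -
  define g where "g y = pochhammer (1 + of_nat p * y) m" for y :: rat
  have "1 + of_nat p * (-1) = (- of_nat (2*m) :: rat)" "1 + of_nat p * (-1/2) = 1/2 - (of_nat m :: rat)"
    using assms(2) by (simp_all add: field_simps)
  hence "g (-1) = (-1)^m * 4^m * pochhammer (1/2) m" "g (-1/2) = (-1)^m * pochhammer (1/2) m"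
    unfolding g_def by (simp_all only: pochhammer_minus_double pochhammer_half_minus)
  moreover have "T = 4^m" unfolding T_def using assms(2) by (simp add: power_mult)
  ultimately have g_minus_one: "g (-1) = T * g (-1/2)" by simp
  have half: "rat_cong_pow (g (-1/2)) (T * fact m) p 3"
    unfolding g_def T_def using pochhammer_half_cong[OF assms(1,2)] .
  have "p_integral p T"
    unfolding T_def by (intro p_integral_power) simp
  have "m < p" using assms(2) by simp
  hence "rat_cong_pow (g 2) (15 * fact m - 24 * g (-1/2) + 10 * g (-1)) p 3"
    unfolding g_def by (rule pochhammer_interpolation_cong[OF assms(1)])
  also have "rat_cong_pow (15 * fact m - 24 * g (-1/2) + 10 * g (-1))
      (15 * fact m - 24 * (T * fact m) + 10 * (T * (T * fact m))) p 3"
    unfolding g_minus_one using half \<open>p_integral p T\<close>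
    by (intro rat_cong_pow_add rat_cong_pow_diff rat_cong_pow_refl rat_cong_pow_mult_left p_integral_numeral)
  also have "15 * fact m - 24 * (T * fact m) + 10 * (T * (T * fact m)) = fact m * (15 - 24 * T + 10 * T^2)"
    by (simp add: algebra_simps power2_eq_square)
  finally show ?thesis
    unfolding g_def .
qed

end

section \<open>The middle term\<close>

lemma G_middle_factorials:
  assumes "p = 2*m + 1"
  shows "G p ((p + 1) div 2) = (-1)^m * of_nat p * fact (2*p - 1) * fact (4*p + (p - 1)) * fact (m + 1)^2
    / (fact (p - 1)^2 * fact p * fact (2*p + m) * fact m * fact (p + 1)^2 * (2^(p-1))^9)"
proof -
  have k: "(p + 1) div 2 = m + 1" using assms by simp
  have idx: "2*p - (m+1) - 1 = 3*m" "p + (m+1) = 2*(m+1) + m" "5*p - (m+1) - 4 = 9*m" "p - 1 = 2*m"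
    "4*p + (p + 1) - 2 = 4*p + (p - 1)" "2*p + (m+1) - 1 = 2*p + m" "2*(m+1) = p + 1"
    using assms by simp_all
  have C: "of_nat ((2*p - 1) choose (p - 1)) = fact (2*p - 1) / (fact (p - 1) * fact p :: rat)"
    "of_nat ((4*p + (p - 1)) choose (2*p + m)) =
       fact (4*p + (p - 1)) / (fact (2*p + m) * fact (2*p + m) :: rat)"
    "of_nat ((3*m) choose (p - 1)) = fact (3*m) / (fact (p - 1) * fact m :: rat)"
    "of_nat ((2*p + m) choose (p + 1)) = fact (2*p + m) / (fact (p + 1) * fact (3*m) :: rat)"
    "of_nat ((p + 1) choose (m+1)) = fact (p + 1) / (fact (m+1) * fact (m+1) :: rat)"
    using assms by (intro of_nat_choose_eq_fact; simp)+
  have sign: "(-1::rat) ^ (p + (m+1)) = (-1)^m"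
    unfolding idx(2) power_add power_mult by simp
  have "(4::rat) ^ (9*m) = (2^2)^(m*9)" by (simp add: mult.commute)
  also have "\<dots> = (2^(2*m))^9" by (simp only: power_mult)
  finally have pow4: "(4::rat) ^ (5*p - (m+1) - 4) = (2^(p-1))^9"
    unfolding idx .
  have "fact (3*m) \<noteq> (0::rat)" by simp
  thus ?thesis
    unfolding G_def k idx(1,5,6,7) C sign pow4
    by (simp add: field_simps power2_eq_square del: fact_Suc)
qed

lemma G_middle:
  assumes "p = 2*m + 1"
  shows "G p ((p + 1) div 2) = (-1)^m * of_nat p * 3 *
      (block_prod p 1 * block_prod p 2 * block_prod p 3 * block_prod p 4) * fact m
    / (block_prod p 0 ^ 4 * pochhammer (1 + of_nat p * 2) m * (2^(p-1))^9)"
proof -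
  define P H where "P = (of_nat p :: rat)" and "H = pochhammer (1 + of_nat p * 2 :: rat) m"
  define W where "W k = (block_prod p k :: rat)" for k
  have blocks: "fact (k * p) = fact k * P ^ k * (\<Prod>i<k. W i)" for k
    unfolding P_def W_def using assms by (intro fact_mult_block_prod) simp
  have p: "fact p = P * W 0" and p2: "fact (2 * p) = 2 * P^2 * W 0 * W 1"
    and p4: "fact (4 * p) = 24 * P^4 * W 0 * W 1 * W 2 * W 3"
    using blocks[of 1] blocks[of 2] blocks[of 4] by (simp_all add: lessThan_nat_numeral fact_numeral)
  have "fact (2*p - 1) = fact (1 * p + (p - 1))" using assms by simp
  also have "\<dots> = fact (1 * p) * W 1" unfolding W_def by (rule fact_add_block_prod)
  finally have F1: "fact (2*p - 1) = P * W 0 * W 1" using p by simp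
  have "fact (4*p + (p - 1)) = fact (4 * p) * W 4" unfolding W_def by (rule fact_add_block_prod)
  hence F4: "fact (4*p + (p - 1)) = 24 * P^4 * W 0 * W 1 * W 2 * W 3 * W 4" using p4 by simp
  have F2: "fact (2*p + m) = 2 * P^2 * W 0 * W 1 * H"
    using fact_add_pochhammer[of "2*p" m, where 'a = rat] p2 unfolding H_def P_def by (simp add: ac_simps)
  define M where "M = (1 + of_nat m :: rat)"
  have "fact (p + 1) = of_nat (p + 1) * fact p" by simp
  also have "of_nat (p + 1) = (2 * M :: rat)" unfolding M_def using assms by simp
  finally have F5: "fact (p + 1) = 2 * M * P * W 0" using p by simp
  have F6: "fact (m + 1) = M * fact m" unfolding M_def by simp
  have nonzero: "W k \<noteq> 0" "H \<noteq> 0" "P \<noteq> 0" "M \<noteq> 0" for k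
    unfolding W_def block_prod_def H_def P_def M_def using assms
    by (auto intro!: pochhammer_pos[THEN less_imp_neq, symmetric] add_pos_nonneg)
  show ?thesis
    unfolding G_middle_factorials[OF assms] F1 F2 F4 F5 F6 p block_prod_0[of p, symmetric]
    using nonzero by (simp add: W_def P_def H_def field_simps power2_eq_square power3_eq_cube power4_eq_xxxx)
qed

context prime_modulus
begin

lemma truncated_inverse_cong:
  assumes "p_integral p t"
  defines "T \<equiv> 1 + of_nat p * t"
  shows "rat_cong_pow ((15 - 24 * T + 10 * T^2) * T^9 * (1 - 5 * (T - 1) + 15 * (T - 1)^2)) 1 p 3"
proof (rule rat_cong_powI)
  define R where "R = 1 + 3*T + 6*T^2 + 10*T^3 + 15*T^4 + 21*T^5 + 28*T^6 + 36*T^7 + 45*T^8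
    - 260*T^9 + 150*T^10"
  have "(15 - 24 * T + 10 * T^2) * T^9 * (1 - 5 * (T - 1) + 15 * (T - 1)^2) = 1 + (T - 1)^3 * R"
    unfolding R_def by (rule truncated_inverse_identity)
  thus "(15 - 24 * T + 10 * T^2) * T^9 * (1 - 5 * (T - 1) + 15 * (T - 1)^2) - 1 = of_nat p ^ 3 * (t^3 * R)"
    by (simp add: T_def power_mult_distrib)
  show "p_integral p (t^3 * R)"
    unfolding R_def T_def using assms(1)
    by (intro p_integral_mult p_integral_power p_integral_add p_integral_diff p_integral_numeral
        p_integral_1 p_integral_of_nat)
qed

lemma pochhammer_two_p_inverse_cong:
  assumes "p > 3" "p = 2*m + 1"
  defines "T \<equiv> (2::rat) ^ (p - 1)"
  shows "rat_cong_pow (pochhammer (1 + of_nat p * 2) m * (T^9 * (1 - 5 * (T - 1) + 15 * (T - 1)^2)))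
    (fact m) p 3"
proof -
  define Q M where "Q = 15 - 24 * T + 10 * T^2" and "M = 1 - 5 * (T - 1) + 15 * (T - 1)^2"
  have "p_integral p (T^9 * M)"
    unfolding T_def M_def by (intro p_integral_mult p_integral_power p_integral_add p_integral_diff) simp_all
  with pochhammer_two_p_cong[OF assms(1,2)]
  have "rat_cong_pow (pochhammer (1 + of_nat p * 2) m * (T^9 * M)) (fact m * Q * (T^9 * M)) p 3"
    unfolding T_def Q_def by (intro rat_cong_pow_mult_right)
  also have "fact m * Q * (T^9 * M) = fact m * (Q * T^9 * M)"
    by (simp add: mult_ac)
  also have "rat_cong_pow \<dots> (fact m * 1) p 3"
  proof -
    from assms(1) have "p \<noteq> 2" by simp
    then obtain t where t: "p_integral p t" "T = 1 + of_nat p * t"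
      unfolding T_def by (rule two_pow_pred_eq)
    have "rat_cong_pow (Q * T^9 * M) 1 p 3"
      unfolding Q_def M_def t(2) using t(1) by (rule truncated_inverse_cong)
    thus ?thesis by (intro rat_cong_pow_mult_left p_integral_fact)
  qed
  finally show ?thesis unfolding M_def by simp
qed

lemma G_middle_cong:
  assumes "p > 3" "p = 2*m + 1"
  defines "T \<equiv> (2::rat) ^ (p - 1)"
  shows "rat_cong_pow (G p ((p + 1) div 2))
    (of_nat p * ((-1)^m * 3 * (1 - 5 * (T - 1) + 15 * (T - 1)^2))) p 4"
proof -
  define W where "W k = (block_prod p k :: rat)" for k
  define H M where "H = pochhammer (1 + of_nat p * 2 :: rat) m"
    and "M = 1 - 5 * (T - 1) + 15 * (T - 1)^2"
  define c where "c = W 0 ^ 4 * H * T^9"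
  define X where "X = W 1 * W 2 * W 3 * W 4 * fact m"
  have W_unit: "p_unit p (W k)" for k
    unfolding W_def block_prod_def using assms(1) by (intro p_unit_pochhammer_shift) simp
  hence W_int: "p_integral p (W k)" for k by (simp add: p_unit_def)
  have W_cong: "rat_cong_pow (W k) (W 0) p 3" for k
    unfolding W_def block_prod_0 using pochhammer_cong_fact[OF assms(1)] by (simp add: block_prod_def)
  have "m < p" using assms(2) by simp
  hence c_unit: "p_unit p c"
    unfolding c_def H_def T_def using W_unit p_unit_pochhammer_shift[of m 2] assms(1)
    by (intro p_unit_mult p_unit_power p_unit_of_nat_less[of 2, simplified]) auto
  have "rat_cong_pow X (W 0 * W 0 * W 0 * W 0 * fact m) p 3"
    unfolding X_def by (intro rat_cong_pow_mult p_integral_mult W_int W_cong rat_cong_pow_refl p_integral_fact)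
  from rat_cong_pow_sym[OF this] have X_cong: "rat_cong_pow (W 0 ^ 4 * fact m) X p 3"
    by (simp add: power4_eq_xxxx)
  have "c * M = W 0 ^ 4 * (H * (T^9 * M))" unfolding c_def by (simp add: mult_ac)
  also have "rat_cong_pow \<dots> (W 0 ^ 4 * fact m) p 3"
    using pochhammer_two_p_inverse_cong[OF assms(1,2)] unfolding H_def M_def T_def
    by (intro rat_cong_pow_mult_left p_integral_power W_int)
  also note X_cong
  also have "X = c * (X / c)" using c_unit by (simp add: p_unit_def)
  finally have "rat_cong_pow M (X / c) p 3"
    by (rule rat_cong_pow_cancel[OF c_unit])
  hence "rat_cong_pow (of_nat p * ((-1)^m * 3 * M)) (of_nat p * ((-1)^m * 3 * (X / c))) p 4"
    by (intro rat_cong_pow_mult_p[of _ _ 3, simplified] rat_cong_pow_mult_left p_integral_mult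
        p_integral_power p_integral_uminus p_integral_1 p_integral_numeral)
  from rat_cong_pow_sym[OF this] show ?thesis
    unfolding G_middle[OF assms(2)] X_def c_def W_def H_def M_def T_def by (simp add: mult_ac)
qed

end

theorem lemma3p3:
  fixes p :: nat
  assumes "prime p" and "p > 3"
  shows "rat_cong_pow (G p ((p + 1) div 2))
           ((-1) ^ ((p - 1) div 2) * 3 * of_nat p *
             (1 - 5 * of_nat p * fermat_quotient2 p + 15 * of_nat p ^ 2 * fermat_quotient2 p ^ 2))
           p 4"
proof -
  interpret prime_modulus p by standard (rule assms(1))
  have "odd p" using prime_odd_nat[OF assms(1)] assms(2) by simp
  then obtain m where p: "p = 2*m + 1" by (rule oddE)
  have "(p - 1) div 2 = m" using p by simp
  moreover have "(2::rat) ^ (p - 1) = of_nat p * fermat_quotient2 p + 1"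
    unfolding fermat_quotient2_def using assms(2) by simp
  ultimately show ?thesis
    using G_middle_cong[OF assms(2) p] by (simp add: power_mult_distrib algebra_simps)
qed

end
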